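(* For $n = 2^i$ with $i \ge 2$, let $W(V)$ be the word on an ordered $n$-element nail set $V$ defined below. Then $W(V)$ solves the $2$-out-of-$n$ picture-hanging puzzle on $V$, and its formal (unreduced) length is \[ \lambda(W(V)) = \tfrac{8}{3}\, n^{\log_2 6} - 4 n^2 = \tfrac{8}{3}\cdot 6^i - 4\cdot 4^i ; \] in particular the freely reduced length of this solution is at most $\tfrac{8}{3} n^{\log_2 6} - 4n^2$. Definitions: For an ordered nail set $U$ with $|U| = 2^t$, the balanced commutator tree $B(U)$ is the generator if $|U|=1$, and otherwise $B(U) = [B(U_1), B(U_2)]$ with $U_1$ the first half and $U_2$ the second half of $U$. For an ordered nail set $U$ of size $2^t$, $t \ge 1$: if $U = \{a,b\}$ (in this order) then $W(U) = a + b$; if $|U| \ge 4$, let $L$ be the first half and $R$ the second half of $U$, let $P = W(L)$, $Q = W(R)$, $C = B(L) + B(R)$, let $X$ be one of $P, Q, C$ of maximal formal length $\lambda$, let $Y, Z$ be the other two (in either order), and set $W(U) = [X, [Y, Z]]$.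
   Context: Words are elements of the free group on the nails, written additively ($+$ group operation, $-$ inverse, $0$ identity); $[a,b] = a + b - a - b$. The formal length $\lambda$ of an expression is its symbol count before any free reduction: $\lambda(\text{generator}) = 1$, $\lambda(x + y) = \lambda(x) + \lambda(y)$, $\lambda([x,y]) = 2\lambda(x) + 2\lambda(y)$. The (reduced) length of a word is the number of letters of its freely reduced form. For $S \subseteq V$, $w|_S$ is the image of $w$ under the homomorphism killing the generators in $S$. A solution to the $k$-out-of-$n$ picture-hanging puzzle on a set $V$ of $n$ nails is a word $w$ with $w|_S = 0 \iff |S| \ge k$ for all $S \subseteq V$ (equivalently for $k\ge1$: $w \ne 0$, removing any $k$ nails gives $0$, removing fewer leaves it nonzero). *)

theory Defs
  imports Complex_Main "HOL-Library.Multiset"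
begin

text \<open>A letter is a nail together with a flag; (x, False) is the generator x,
  (x, True) its inverse.\<close>
type_synonym 'a letter = "'a \<times> bool"

fun inv_letter :: "'a letter \<Rightarrow> 'a letter" where
  "inv_letter (x, b) = (x, \<not> b)"

definition inv_word :: "'a letter list \<Rightarrow> 'a letter list" where
  "inv_word w = rev (map inv_letter w)"

fun red :: "'a letter list \<Rightarrow> 'a letter list" where
  "red [] = []"
| "red (x # xs) = (case red xs of
      [] \<Rightarrow> [x]
    | y # ys \<Rightarrow> (if y = inv_letter x then ys else x # y # ys))"

text \<open>Image under the homomorphism killing the generators in S (before reduction).\<close>
definition kill :: "'a set \<Rightarrow> 'a letter list \<Rightarrow> 'a letter list" where
  "kill S w = filter (\<lambda>l. fst l \<notin> S) w"

definition solves :: "nat \<Rightarrow> 'a set \<Rightarrow> 'a letter list \<Rightarrow> bool" where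
  "solves k V w \<longleftrightarrow> (\<forall>S. S \<subseteq> V \<longrightarrow> (red (kill S w) = [] \<longleftrightarrow> card S \<ge> k))"

datatype 'a fexpr = Gen 'a | Add "'a fexpr" "'a fexpr" | Comm "'a fexpr" "'a fexpr"

fun word :: "'a fexpr \<Rightarrow> 'a letter list" where
  "word (Gen a) = [(a, False)]"
| "word (Add x y) = word x @ word y"
| "word (Comm x y) = word x @ word y @ inv_word (word x) @ inv_word (word y)"

fun flen :: "'a fexpr \<Rightarrow> nat" where
  "flen (Gen a) = 1"
| "flen (Add x y) = flen x + flen y"
| "flen (Comm x y) = 2 * flen x + 2 * flen y"

function btree :: "'a list \<Rightarrow> 'a fexpr" where
  "btree U = (if length U \<le> 1 then Gen (hd U)
     else Comm (btree (take (length U div 2) U)) (btree (drop (length U div 2) U)))"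
  by pat_completeness auto
termination by (relation "measure length") auto

text \<open>The construction W(U); the choice of X among P, Q, C of maximal formal
  length and the order of Y, Z are arbitrary, so W is a relation.\<close>
inductive isW :: "'a list \<Rightarrow> 'a fexpr \<Rightarrow> bool" where
  base: "isW [a, b] (Add (Gen a) (Gen b))"
| step: "\<lbrakk> length U \<ge> 4;
           L = take (length U div 2) U; R = drop (length U div 2) U;
           isW L P; isW R Q; C = Add (btree L) (btree R);
           mset [X, Y, Z] = mset [P, Q, C];
           flen P \<le> flen X; flen Q \<le> flen X; flen C \<le> flen X \<rbrakk>
         \<Longrightarrow> isW U (Comm X (Comm Y Z))"

end

(*
  Removing two distinct nails a, b kills W(V): if both lie in one half, induction kills P or Q;
  otherwise a kills B(L) and b kills B(R), since a balanced commutator tree dies as soon as one of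
  its leaves does, so C dies; and a commutator with a trivial entry is trivial.

  Removing at most one nail leaves W(V) nontrivial, which is witnessed by homomorphisms into the
  alternating group on {0, ..., 4}.  By induction along the construction, W(U) and B(U) can be sent
  simultaneously to omega = (1 2)(3 4) and to the 5-cycle beta, and for every nail a of U there is a
  homomorphism killing a and sending W(U) to the 3-cycle kappa.  In the inductive step the
  homomorphisms on the two halves are conjugated independently and glued together; for each of the
  six ways of arranging P, Q, C into [X, [Y, Z]] suitable conjugators exist.

  For the length, lambda(W) = 4 (lambda P + lambda Q + lambda C) - 2 lambda X with
  lambda C = 2 * 4^(t-1); for t >= 3 the maximum lambda X is lambda P = lambda Q, and the resulting
  recursion solves to 8/3 * 6^t - 4 * 4^t.
*)

theory Submission
  imports Defs "HOL-Combinatorics.Perm"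
begin

unbundle permutation_syntax

declare btree.simps [simp del]

section \<open>Free reduction\<close>

lemma inv_inv_letter [simp]: "inv_letter (inv_letter l) = l"
  by (cases l) simp

fun reduced :: "'a letter list \<Rightarrow> bool" where
  "reduced (x # y # ys) \<longleftrightarrow> y \<noteq> inv_letter x \<and> reduced (y # ys)"
| "reduced _ \<longleftrightarrow> True"

lemma reduced_ConsD: "reduced (x # xs) \<Longrightarrow> reduced xs"
  by (cases xs) auto

lemma reduced_red: "reduced (red xs)"
  by (induction xs) (auto split: list.split dest: reduced_ConsD)

lemma red_reduced: "reduced xs \<Longrightarrow> red xs = xs"
  by (induction xs rule: reduced.induct) auto

lemma red_red [simp]: "red (red xs) = red xs"
  by (rule red_reduced[OF reduced_red])

lemma red_Cons_red: "red (x # red xs) = red (x # xs)"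
  by simp

declare red.simps(2) [simp del]

lemma red_append_red_right: "red (u @ red v) = red (u @ v)"
proof (induction u)
  case (Cons x u)
  then show ?case
    by (metis append_Cons red_Cons_red)
qed simp

lemma red_cancel: "red (x # inv_letter x # z) = red z"
proof -
  have outer: "red (x # inv_letter x # z) = red (x # red (inv_letter x # z))"
    by (simp only: red_Cons_red)
  show ?thesis
  proof (cases "red z")
    case Nil
    then show ?thesis
      using outer by (simp add: red.simps(2))
  next
    case (Cons y ys)
    show ?thesis
    proof (cases "y = x")
      case True
      with Cons have "red (inv_letter x # z) = ys"
        by (simp add: red.simps(2))
      with outer have "red (x # inv_letter x # z) = red (x # ys)"
        by simp
      also have "\<dots> = red z"
        using Cons True reduced_red[of z] by (simp add: red_reduced)
      finally show ?thesis .
    next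
      case False
      with Cons have "red (inv_letter x # z) = inv_letter x # red z"
        by (simp add: red.simps(2))
      with outer show ?thesis
        by (simp add: red.simps(2))
    qed
  qed
qed

lemma red_append_red_left: "red (red u @ v) = red (u @ v)"
proof (induction u)
  case (Cons x u)
  have IH: "red ((x # u) @ v) = red (x # (red u @ v))"
    by (metis Cons.IH append_Cons red_Cons_red)
  show ?case
  proof (cases "red u")
    case Nil
    then show ?thesis
      using IH by (simp add: red.simps(2))
  next
    case (Cons y ys)
    show ?thesis
    proof (cases "y = inv_letter x")
      case True
      with Cons have "red (x # u) = ys"
        by (simp add: red.simps(2))
      with Cons True IH show ?thesis
        by (simp add: red_cancel)
    next
      case False
      with Cons have "red (x # u) = x # red u"
        by (simp add: red.simps(2))
      with IH show ?thesis
        by simp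
    qed
  qed
qed simp

lemma red_append_cong:
  assumes "red a = red b"
  shows "red (u @ a @ v) = red (u @ b @ v)"
proof -
  have "red (u @ a @ v) = red (u @ red (red a @ v))"
    by (simp only: red_append_red_left red_append_red_right)
  also have "\<dots> = red (u @ b @ v)"
    by (simp only: assms red_append_red_left red_append_red_right)
  finally show ?thesis .
qed

lemma length_red_le: "length (red w) \<le> length w"
  by (induction w) (auto simp: red.simps(2) split: list.split)

lemma inv_word_Nil [simp]: "inv_word [] = []"
  and inv_word_Cons [simp]: "inv_word (x # w) = inv_word w @ [inv_letter x]"
  and inv_word_append [simp]: "inv_word (u @ v) = inv_word v @ inv_word u"
  by (simp_all add: inv_word_def)

lemma inv_word_inv_word [simp]: "inv_word (inv_word w) = w"
  by (simp add: inv_word_def rev_map comp_def)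

lemma red_inv_word_append_self [simp]: "red (inv_word w @ w) = []"
proof (induction w)
  case (Cons x w)
  have "red [inv_letter x, x] = []"
    using red_cancel[of "inv_letter x" "[]"] by simp
  then have "red (inv_word w @ [inv_letter x, x] @ w) = red (inv_word w @ [] @ w)"
    using red_append_cong[of "[inv_letter x, x]" "[]"] by simp
  then show ?case
    using Cons.IH by simp
qed simp

lemma red_append_inv_word_self [simp]: "red (w @ inv_word w) = []"
  using red_inv_word_append_self[of "inv_word w"] by simp

lemma red_inv_word_Nil: "red w = [] \<Longrightarrow> red (inv_word w) = []"
  using red_append_cong[of "[]" w "inv_word w" "[]"] by simp

lemma red_commutator_Nil:
  assumes "red a = [] \<or> red b = []"
  shows "red (a @ b @ inv_word a @ inv_word b) = []"
  using assms
proof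
  assume a: "red a = []"
  have "red (a @ b @ inv_word a @ inv_word b) = red ([] @ b @ inv_word a @ inv_word b)"
    using red_append_cong[of a "[]" "[]"] a by simp
  also have "\<dots> = red (b @ [] @ inv_word b)"
    using red_append_cong[of "inv_word a" "[]" b] red_inv_word_Nil[OF a] by simp
  finally show ?thesis
    by simp
next
  assume b: "red b = []"
  have "red (a @ b @ inv_word a @ inv_word b) = red (a @ [] @ inv_word a @ inv_word b)"
    using red_append_cong[of b "[]" a] b by simp
  also have "\<dots> = red ((a @ inv_word a) @ [] @ [])"
    using red_append_cong[of "inv_word b" "[]" "a @ inv_word a" "[]"] red_inv_word_Nil[OF b] by simp
  finally show ?thesis
    by simp
qed

lemma btree_singleton: "btree [a] = Gen a"
  by (simp add: btree.simps)

lemma btree_halves: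
  "2 \<le> length U \<Longrightarrow> btree U = Comm (btree (take (length U div 2) U)) (btree (drop (length U div 2) U))"
  by (simp add: btree.simps)

lemma set_fexpr_btree: "U \<noteq> [] \<Longrightarrow> set_fexpr (btree U) \<subseteq> set U"
proof (induction U rule: btree.induct)
  case (1 U)
  show ?case
  proof (cases "length U \<le> 1")
    case True
    with "1.prems" show ?thesis
      by (cases U) (auto simp: btree_singleton)
  next
    case False
    then have "take (length U div 2) U \<noteq> []" "drop (length U div 2) U \<noteq> []"
      by auto
    with "1.IH" False show ?thesis
      by (auto simp: btree_halves dest: in_set_takeD in_set_dropD)
  qed
qed

lemma flen_btree: "length U = 2 ^ t \<Longrightarrow> flen (btree U) = 4 ^ t"
proof (induction t arbitrary: U)
  case 0
  then show ?case
    by (auto simp: length_Suc_conv btree_singleton)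
next
  case (Suc t)
  then show ?case
    by (simp add: btree_halves)
qed

lemma split_halves:
  assumes "4 \<le> length U" and "L = take (length U div 2) U" and "R = drop (length U div 2) U"
  shows "L \<noteq> []" and "R \<noteq> []" and "set U = set L \<union> set R"
    and "btree U = Comm (btree L) (btree R)"
    and "distinct U \<Longrightarrow> distinct L \<and> distinct R \<and> set L \<inter> set R = {}"
proof -
  have U: "U = L @ R"
    using assms(2,3) by simp
  show "L \<noteq> []" "R \<noteq> []"
    using assms by auto
  show "set U = set L \<union> set R"
    by (subst U) simp
  show "btree U = Comm (btree L) (btree R)"
    using assms by (simp add: btree_halves)
  show "distinct L \<and> distinct R \<and> set L \<inter> set R = {}" if "distinct U"
    using that by (subst (asm) U) simp
qed

lemma isW_nails: "isW U e \<Longrightarrow> set_fexpr e \<subseteq> set U"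
proof (induction rule: isW.induct)
  case (step U L R P Q C X Y Z)
  note halves = split_halves[OF step.hyps(1-3)]
  have "set [X, Y, Z] = set [P, Q, C]"
    by (metis step.hyps(7) set_mset_mset)
  moreover have "set_fexpr C \<subseteq> set U"
    using step.hyps(6) set_fexpr_btree halves(1-3) by auto
  ultimately show ?case
    using step.IH halves(3) by auto
qed simp

lemma kill_append [simp]: "kill S (u @ v) = kill S u @ kill S v"
  by (simp add: kill_def)

lemma kill_inv_word [simp]: "kill S (inv_word w) = inv_word (kill S w)"
  by (induction w) (auto simp: kill_def)

definition falls :: "'a set \<Rightarrow> 'a fexpr \<Rightarrow> bool" where
  "falls S e \<longleftrightarrow> red (kill S (word e)) = []"

lemma falls_Gen: "a \<in> S \<Longrightarrow> falls S (Gen a)"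
  by (simp add: falls_def kill_def)

lemma falls_Add: "falls S x \<Longrightarrow> falls S y \<Longrightarrow> falls S (Add x y)"
  using red_append_cong[of "kill S (word x)" "[]" "[]" "kill S (word y)"] by (simp add: falls_def)

lemma falls_Comm: "falls S x \<or> falls S y \<Longrightarrow> falls S (Comm x y)"
  using red_commutator_Nil by (auto simp: falls_def)

lemma falls_btree: "a \<in> S \<Longrightarrow> a \<in> set U \<Longrightarrow> falls S (btree U)"
proof (induction U rule: btree.induct)
  case (1 U)
  show ?case
  proof (cases "length U \<le> 1")
    case True
    with "1.prems" have "U = [a]"
      by (cases U) auto
    with "1.prems" show ?thesis
      by (simp add: btree_singleton falls_Gen)
  next
    case False
    have "a \<in> set (take (length U div 2) U) \<or> a \<in> set (drop (length U div 2) U)"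
      using "1.prems" by (metis Un_iff append_take_drop_id set_append)
    then show ?thesis
      using "1.IH" "1.prems" False by (auto simp: btree_halves intro!: falls_Comm)
  qed
qed

section \<open>Evaluation in permutation groups\<close>

definition commutator :: "'b perm \<Rightarrow> 'b perm \<Rightarrow> 'b perm" where
  "commutator x y = x * y * inverse x * inverse y"

definition conjugate :: "'b perm \<Rightarrow> 'b perm \<Rightarrow> 'b perm" where
  "conjugate h x = h * x * inverse h"

lemma inverse_mult_cancel_left [simp]: "inverse h * (h * x) = x" for h x :: "'b perm"
  by (simp flip: mult.assoc)

lemma mult_inverse_cancel_left [simp]: "h * (inverse h * x) = x" for h x :: "'b perm"
  by (simp flip: mult.assoc)

lemma conjugate_one [simp]: "conjugate h 1 = 1"
  by (simp add: conjugate_def)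

lemma conjugate_mult: "conjugate h (x * y) = conjugate h x * conjugate h y"
  by (simp add: conjugate_def mult.assoc)

lemma conjugate_commutator:
  "conjugate h (commutator x y) = commutator (conjugate h x) (conjugate h y)"
  by (simp add: commutator_def conjugate_def mult.assoc)

fun perm_of_letter :: "('a \<Rightarrow> 'b perm) \<Rightarrow> 'a letter \<Rightarrow> 'b perm" where
  "perm_of_letter \<phi> (a, inverted) = (if inverted then inverse (\<phi> a) else \<phi> a)"

definition perm_of_word :: "('a \<Rightarrow> 'b perm) \<Rightarrow> 'a letter list \<Rightarrow> 'b perm" where
  "perm_of_word \<phi> w = prod_list (map (perm_of_letter \<phi>) w)"

lemma perm_of_word_Nil [simp]: "perm_of_word \<phi> [] = 1"
  and perm_of_word_Cons [simp]: "perm_of_word \<phi> (l # w) = perm_of_letter \<phi> l * perm_of_word \<phi> w"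
  and perm_of_word_append [simp]: "perm_of_word \<phi> (u @ v) = perm_of_word \<phi> u * perm_of_word \<phi> v"
  by (simp_all add: perm_of_word_def)

lemma perm_of_letter_inv_letter: "perm_of_letter \<phi> (inv_letter l) = inverse (perm_of_letter \<phi> l)"
  by (cases l) simp

lemma perm_of_word_inv_word: "perm_of_word \<phi> (inv_word w) = inverse (perm_of_word \<phi> w)"
  by (induction w) (simp_all add: perm_of_letter_inv_letter)

lemma perm_of_word_red: "perm_of_word \<phi> (red w) = perm_of_word \<phi> w"
proof (induction w)
  case (Cons l w)
  note IH = Cons.IH
  show ?case
  proof (cases "red w")
    case Nil
    with IH show ?thesis
      by (simp add: red.simps(2))
  next
    case (Cons m ms)
    with IH have w: "perm_of_word \<phi> w = perm_of_letter \<phi> m * perm_of_word \<phi> ms"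
      by simp
    show ?thesis
    proof (cases "m = inv_letter l")
      case True
      with Cons w show ?thesis
        by (simp add: red.simps(2) perm_of_letter_inv_letter)
    next
      case False
      with Cons w show ?thesis
        by (simp add: red.simps(2))
    qed
  qed
qed simp

lemma perm_of_word_kill: "(\<And>a. a \<in> S \<Longrightarrow> \<phi> a = 1) \<Longrightarrow> perm_of_word \<phi> (kill S w) = perm_of_word \<phi> w"
  by (induction w) (auto simp: kill_def)

fun perm_of_fexpr :: "('a \<Rightarrow> 'b perm) \<Rightarrow> 'a fexpr \<Rightarrow> 'b perm" where
  "perm_of_fexpr \<phi> (Gen a) = \<phi> a"
| "perm_of_fexpr \<phi> (Add x y) = perm_of_fexpr \<phi> x * perm_of_fexpr \<phi> y"
| "perm_of_fexpr \<phi> (Comm x y) = commutator (perm_of_fexpr \<phi> x) (perm_of_fexpr \<phi> y)"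

lemma perm_of_word_word: "perm_of_word \<phi> (word e) = perm_of_fexpr \<phi> e"
  by (induction e) (simp_all add: perm_of_word_inv_word commutator_def mult.assoc)

lemma perm_of_fexpr_cong:
  "(\<And>a. a \<in> set_fexpr e \<Longrightarrow> \<phi> a = \<psi> a) \<Longrightarrow> perm_of_fexpr \<phi> e = perm_of_fexpr \<psi> e"
  by (induction e) auto

lemma perm_of_fexpr_conjugate:
  "perm_of_fexpr (\<lambda>a. conjugate h (\<phi> a)) e = conjugate h (perm_of_fexpr \<phi> e)"
  by (induction e) (simp_all add: conjugate_mult conjugate_commutator)

lemma perm_of_fexpr_falls:
  assumes "falls S e" and "\<And>a. a \<in> S \<Longrightarrow> \<phi> a = 1"
  shows "perm_of_fexpr \<phi> e = 1"
proof -
  have "perm_of_fexpr \<phi> e = perm_of_word \<phi> (red (kill S (word e)))"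
    by (simp add: perm_of_word_red perm_of_word_kill assms(2) perm_of_word_word)
  with assms(1) show ?thesis
    by (simp add: falls_def)
qed

definition arrangements :: "'x \<times> 'x \<times> 'x \<Rightarrow> ('x \<times> 'x \<times> 'x) list" where
  "arrangements = (\<lambda>(a, b, c). [(a, b, c), (a, c, b), (b, a, c), (b, c, a), (c, a, b), (c, b, a)])"

lemma length_arrangements: "length (arrangements t) = 6"
  by (simp add: arrangements_def split: prod.split)

lemma mset_eq_arrangements:
  assumes "mset [X, Y, Z] = mset [P, Q, C]"
  shows "\<exists>s<6. (X, Y, Z) = arrangements (P, Q, C) ! s"
proof -
  have "(X, Y, Z) \<in> set (arrangements (P, Q, C))"
    using assms by (auto simp: arrangements_def add_eq_conv_ex)
  then show ?thesis
    by (metis in_set_conv_nth length_arrangements)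
qed

fun nested_commutator :: "'b perm \<times> 'b perm \<times> 'b perm \<Rightarrow> 'b perm" where
  "nested_commutator (x, y, z) = commutator x (commutator y z)"

lemma arrangements_map:
  "arrangements (f a, f b, f c) = map (map_prod f (map_prod f f)) (arrangements (a, b, c))"
  by (simp add: arrangements_def)

lemma perm_of_fexpr_arrangements:
  assumes "s < 6" and "(X, Y, Z) = arrangements (P, Q, C) ! s"
  shows "perm_of_fexpr \<phi> (Comm X (Comm Y Z)) = nested_commutator
    (arrangements (perm_of_fexpr \<phi> P, perm_of_fexpr \<phi> Q, perm_of_fexpr \<phi> C) ! s)"
  using assms(1) by (simp add: arrangements_map length_arrangements flip: assms(2))

section \<open>Witnesses in the alternating group on five points\<close>

definition omega :: "nat perm" where
  "omega = \<langle>[1, 2]\<rangle> * \<langle>[3, 4]\<rangle>"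

definition beta :: "nat perm" where
  "beta = \<langle>[0, 1, 3, 4, 2]\<rangle>"

definition kappa :: "nat perm" where
  "kappa = \<langle>[2, 3, 4]\<rangle>"

lemma nat_perm_eqI:
  fixes f g :: "nat perm"
  assumes "\<And>a. a \<notin> {0, 1, 2, 3, 4} \<Longrightarrow> f \<langle>$\<rangle> a = g \<langle>$\<rangle> a"
    and "f \<langle>$\<rangle> 0 = g \<langle>$\<rangle> 0" "f \<langle>$\<rangle> 1 = g \<langle>$\<rangle> 1" "f \<langle>$\<rangle> 2 = g \<langle>$\<rangle> 2"
    and "f \<langle>$\<rangle> 3 = g \<langle>$\<rangle> 3" "f \<langle>$\<rangle> 4 = g \<langle>$\<rangle> 4"
  shows "f = g"
proof (rule perm_eqI)
  fix a
  show "f \<langle>$\<rangle> a = g \<langle>$\<rangle> a"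
    by (cases "a \<in> {0, 1, 2, 3, 4}") (use assms in auto)
qed

lemmas perm_computation = omega_def beta_def kappa_def commutator_def conjugate_def apply_times

lemma kappa_ne_one: "kappa \<noteq> 1"
proof
  assume "kappa = 1"
  then have "kappa \<langle>$\<rangle> 2 = 2"
    by simp
  then show False
    by (simp add: kappa_def apply_times)
qed

lemma omega_beta_base: "\<exists>x y. x * y = omega \<and> commutator x y = beta"
proof (intro exI conjI)
  show "\<langle>[0, 1, 3]\<rangle> * \<langle>[0, 3, 4, 1, 2]\<rangle> = omega"
    by (rule nat_perm_eqI) (simp_all add: perm_computation)
  show "commutator \<langle>[0, 1, 3]\<rangle> \<langle>[0, 3, 4, 1, 2]\<rangle> = beta"
    by (rule nat_perm_eqI) (simp_all add: perm_computation)
qed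

(* The conjugator pairs, one for each arrangement, were found by exhaustive search. *)

lemma conjugators_omega_beta:
  assumes "s < 6"
  shows "\<exists>g h. commutator (conjugate g beta) (conjugate h beta) = beta \<and>
    nested_commutator (arrangements (conjugate g omega, conjugate h omega,
      conjugate g beta * conjugate h beta) ! s) = omega"
    (is "\<exists>g h. ?works g h")
proof -
  have "?works g h" if "(g, h) = [
      (\<langle>[1, 3, 2]\<rangle>, \<langle>[0, 2, 1]\<rangle>),
      (\<langle>[1, 3, 2]\<rangle>, \<langle>[0, 1, 2, 4, 3]\<rangle>),
      (\<langle>[0, 3, 2]\<rangle>, \<langle>[1, 4, 3]\<rangle>),
      (\<langle>[0, 1]\<rangle> * \<langle>[3, 4]\<rangle>, \<langle>[2, 3, 4]\<rangle>),
      (\<langle>[0, 2, 3]\<rangle>, \<langle>[0, 1, 4, 3, 2]\<rangle>),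
      (\<langle>[0, 4, 1]\<rangle>, \<langle>[0, 1, 3, 2, 4]\<rangle>)] ! s" for g h
  proof -
    have "s \<in> {0, 1, 2, 3, 4, 5}"
      using assms by auto
    with that show ?thesis
      by (elim insertE emptyE; clarsimp simp: arrangements_def; intro conjI nat_perm_eqI;
          simp add: perm_computation)
  qed
  then show ?thesis
    by (metis surj_pair)
qed

lemma conjugators_kappa:
  assumes "s < 6"
  shows "\<exists>g h. nested_commutator (arrangements (conjugate g kappa, conjugate h omega,
    conjugate h beta) ! s) = kappa"
    (is "\<exists>g h. ?works g h")
proof -
  have "?works g h" if "(g, h) = [
      (\<langle>[1, 2]\<rangle>, \<langle>[0, 3]\<rangle>),
      (\<langle>[1, 2]\<rangle>, \<langle>[2, 4]\<rangle>),
      (\<langle>[1, 4]\<rangle>, \<langle>[0, 2]\<rangle>),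
      (\<langle>[0, 4, 2]\<rangle>, \<langle>[0, 2]\<rangle>),
      (\<langle>[1, 3]\<rangle>, \<langle>[0, 4]\<rangle>),
      (\<langle>[1, 2]\<rangle>, \<langle>[0, 3, 2]\<rangle>)] ! s" for g h
  proof -
    have "s \<in> {0, 1, 2, 3, 4, 5}"
      using assms by auto
    with that show ?thesis
      by (elim insertE emptyE; clarsimp simp: arrangements_def; intro nat_perm_eqI;
          simp add: perm_computation)
  qed
  then show ?thesis
    by (metis surj_pair)
qed

lemma perm_of_fexpr_if:
  "set_fexpr e \<subseteq> A \<Longrightarrow> perm_of_fexpr (\<lambda>a. if a \<in> A then \<phi> a else \<psi> a) e = perm_of_fexpr \<phi> e"
  "set_fexpr e \<inter> A = {} \<Longrightarrow> perm_of_fexpr (\<lambda>a. if a \<in> A then \<phi> a else \<psi> a) e = perm_of_fexpr \<psi> e"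
  by (rule perm_of_fexpr_cong; auto)+

lemma isW_realises_omega_beta:
  assumes "isW U e" and "distinct U"
  shows "\<exists>\<phi>. perm_of_fexpr \<phi> e = omega \<and> perm_of_fexpr \<phi> (btree U) = beta"
  using assms
proof (induction rule: isW.induct)
  case (base a b)
  obtain x y where "x * y = omega" "commutator x y = beta"
    using omega_beta_base by blast
  with base show ?case
    by (intro exI[of _ "\<lambda>c. if c = a then x else y"]) (simp add: btree_halves btree_singleton)
next
  case (step U L R P Q C X Y Z)
  note halves = split_halves[OF step.hyps(1-3)]
  have disjoint: "distinct L" "distinct R" "set L \<inter> set R = {}"
    using halves(5) step.prems by auto
  obtain \<phi> where \<phi>: "perm_of_fexpr \<phi> P = omega" "perm_of_fexpr \<phi> (btree L) = beta"
    using step.IH(1) disjoint by blast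
  obtain \<psi> where \<psi>: "perm_of_fexpr \<psi> Q = omega" "perm_of_fexpr \<psi> (btree R) = beta"
    using step.IH(2) disjoint by blast
  obtain s where s: "s < 6" "(X, Y, Z) = arrangements (P, Q, C) ! s"
    using mset_eq_arrangements[OF step.hyps(7)] by blast
  obtain g h where gh: "commutator (conjugate g beta) (conjugate h beta) = beta"
    "nested_commutator (arrangements (conjugate g omega, conjugate h omega,
      conjugate g beta * conjugate h beta) ! s) = omega"
    using conjugators_omega_beta[OF s(1)] by blast
  define \<chi> where "\<chi> = (\<lambda>c. if c \<in> set L then conjugate g (\<phi> c) else conjugate h (\<psi> c))"
  have "set_fexpr P \<subseteq> set L" "set_fexpr (btree L) \<subseteq> set L"
    "set_fexpr Q \<inter> set L = {}" "set_fexpr (btree R) \<inter> set L = {}"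
    using isW_nails[OF step.hyps(4)] isW_nails[OF step.hyps(5)] set_fexpr_btree halves(1,2) disjoint(3)
    by blast+
  then have images: "perm_of_fexpr \<chi> P = conjugate g omega"
    "perm_of_fexpr \<chi> (btree L) = conjugate g beta"
    "perm_of_fexpr \<chi> Q = conjugate h omega" "perm_of_fexpr \<chi> (btree R) = conjugate h beta"
    unfolding \<chi>_def using \<phi> \<psi> by (simp_all add: perm_of_fexpr_if perm_of_fexpr_conjugate)
  have "perm_of_fexpr \<chi> (Comm X (Comm Y Z)) = nested_commutator
    (arrangements (perm_of_fexpr \<chi> P, perm_of_fexpr \<chi> Q, perm_of_fexpr \<chi> C) ! s)"
    by (rule perm_of_fexpr_arrangements[OF s])
  also have "\<dots> = omega"
    using gh(2) images step.hyps(6) by simp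
  finally have "perm_of_fexpr \<chi> (Comm X (Comm Y Z)) = omega" .
  moreover have "perm_of_fexpr \<chi> (btree U) = beta"
    using gh(1) images halves(4) by simp
  ultimately show ?case
    by blast
qed

lemma realise_kappa_step:
  assumes killed: "\<phi> a = 1" "perm_of_fexpr \<phi> PK = kappa" "set_fexpr PK \<subseteq> set A" "a \<in> set A"
    and generic: "perm_of_fexpr \<psi> PF = omega" "perm_of_fexpr \<psi> (btree B) = beta"
      "set_fexpr PF \<subseteq> set B"
    and "set A \<inter> set B = {}" "A \<noteq> []" "B \<noteq> []"
    and "mset [X, Y, Z] = mset [PK, PF, C]"
    and "C = Add (btree A) (btree B) \<or> C = Add (btree B) (btree A)"
  shows "\<exists>\<chi>. \<chi> a = 1 \<and> perm_of_fexpr \<chi> (Comm X (Comm Y Z)) = kappa"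
proof -
  obtain s where s: "s < 6" "(X, Y, Z) = arrangements (PK, PF, C) ! s"
    using mset_eq_arrangements[OF assms(11)] by blast
  obtain g h where gh: "nested_commutator (arrangements (conjugate g kappa, conjugate h omega,
      conjugate h beta) ! s) = kappa"
    using conjugators_kappa[OF s(1)] by blast
  define \<chi> where "\<chi> = (\<lambda>c. if c \<in> set A then conjugate g (\<phi> c) else conjugate h (\<psi> c))"
  have "\<chi> a = 1"
    using killed(1,4) by (simp add: \<chi>_def)
  have "set_fexpr PF \<inter> set A = {}" "set_fexpr (btree B) \<inter> set A = {}"
    using generic(3) set_fexpr_btree[OF \<open>B \<noteq> []\<close>] \<open>set A \<inter> set B = {}\<close> by blast+
  then have images: "perm_of_fexpr \<chi> PK = conjugate g kappa"
    "perm_of_fexpr \<chi> PF = conjugate h omega" "perm_of_fexpr \<chi> (btree B) = conjugate h beta"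
    unfolding \<chi>_def using killed(2,3) generic(1,2)
    by (simp_all add: perm_of_fexpr_if perm_of_fexpr_conjugate)
  have "perm_of_fexpr \<chi> (btree A) = 1"
    using perm_of_fexpr_falls[OF falls_btree[of a "{a}" A]] killed(4) \<open>\<chi> a = 1\<close> by blast
  then have "perm_of_fexpr \<chi> C = conjugate h beta"
    using assms(12) images(3) by auto
  have "perm_of_fexpr \<chi> (Comm X (Comm Y Z)) = nested_commutator
    (arrangements (perm_of_fexpr \<chi> PK, perm_of_fexpr \<chi> PF, perm_of_fexpr \<chi> C) ! s)"
    by (rule perm_of_fexpr_arrangements[OF s])
  also have "\<dots> = kappa"
    using gh images \<open>perm_of_fexpr \<chi> C = conjugate h beta\<close> by simp
  finally show ?thesis
    using \<open>\<chi> a = 1\<close> by blast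
qed

lemma isW_realises_kappa:
  assumes "isW U e" and "distinct U" and "a \<in> set U"
  shows "\<exists>\<phi>. \<phi> a = 1 \<and> perm_of_fexpr \<phi> e = kappa"
  using assms
proof (induction arbitrary: a rule: isW.induct)
  case (base b c)
  then show ?case
    by (intro exI[of _ "\<lambda>d. if d = a then 1 else kappa"]) auto
next
  case (step U L R P Q C X Y Z)
  note halves = split_halves[OF step.hyps(1-3)]
  have disjoint: "distinct L" "distinct R" "set L \<inter> set R = {}"
    using halves(5) step.prems(1) by auto
  have "a \<in> set L \<or> a \<in> set R"
    using halves(3) step.prems(2) by blast
  then show ?case
  proof
    assume "a \<in> set L"
    obtain \<phi> where \<phi>: "\<phi> a = 1" "perm_of_fexpr \<phi> P = kappa"
      using step.IH(1)[OF disjoint(1) \<open>a \<in> set L\<close>] by blast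
    obtain \<psi> where \<psi>: "perm_of_fexpr \<psi> Q = omega" "perm_of_fexpr \<psi> (btree R) = beta"
      using isW_realises_omega_beta[OF step.hyps(5) disjoint(2)] by blast
    show ?case
      by (rule realise_kappa_step[OF \<phi> isW_nails[OF step.hyps(4)] \<open>a \<in> set L\<close>
            \<psi> isW_nails[OF step.hyps(5)] disjoint(3) halves(1,2) step.hyps(7)])
        (simp add: step.hyps(6))
  next
    assume "a \<in> set R"
    obtain \<phi> where \<phi>: "\<phi> a = 1" "perm_of_fexpr \<phi> Q = kappa"
      using step.IH(2)[OF disjoint(2) \<open>a \<in> set R\<close>] by blast
    obtain \<psi> where \<psi>: "perm_of_fexpr \<psi> P = omega" "perm_of_fexpr \<psi> (btree L) = beta"
      using isW_realises_omega_beta[OF step.hyps(4) disjoint(1)] by blast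
    have "set R \<inter> set L = {}" and "mset [X, Y, Z] = mset [Q, P, C]"
      using disjoint(3) step.hyps(7) by (auto simp: add_mset_commute)
    then show ?case
      by (rule realise_kappa_step[OF \<phi> isW_nails[OF step.hyps(5)] \<open>a \<in> set R\<close>
            \<psi> isW_nails[OF step.hyps(4)] _ halves(2,1)])
        (simp add: step.hyps(6))
  qed
qed

lemma isW_falls:
  assumes "isW U e" and "a \<in> S" "b \<in> S" "a \<noteq> b" and "a \<in> set U" "b \<in> set U"
  shows "falls S e"
  using assms
proof (induction arbitrary: a b rule: isW.induct)
  case (base c d)
  then show ?case
    by (auto simp: falls_def kill_def)
next
  case (step U L R P Q C X Y Z)
  note halves = split_halves[OF step.hyps(1-3)]
  have "falls S P \<or> falls S Q \<or> falls S C"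
  proof (cases "a \<in> set L \<and> b \<in> set L \<or> a \<in> set R \<and> b \<in> set R")
    case True
    then show ?thesis
      using step.IH step.prems(1-3) by blast
  next
    case False
    then have "falls S (btree L)" and "falls S (btree R)"
      using step.prems halves(3) by (auto intro: falls_btree)
    then show ?thesis
      by (simp add: step.hyps(6) falls_Add)
  qed
  moreover have "set [X, Y, Z] = set [P, Q, C]"
    by (metis step.hyps(7) set_mset_mset)
  ultimately have "falls S X \<or> falls S Y \<or> falls S Z"
    by auto
  then show ?case
    by (auto intro!: falls_Comm)
qed

lemma isW_solves:
  assumes "isW V e" and "distinct V"
  shows "solves 2 (set V) (word e)"
  unfolding solves_def
proof (intro allI impI)
  fix S
  assume "S \<subseteq> set V"
  then have "finite S"
    by (rule finite_subset) simp
  show "red (kill S (word e)) = [] \<longleftrightarrow> 2 \<le> card S"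
  proof
    assume "2 \<le> card S"
    then have "\<not> card S \<le> Suc 0"
      by simp
    then obtain a b where "a \<in> S" "b \<in> S" "a \<noteq> b"
      using card_le_Suc0_iff_eq[OF \<open>finite S\<close>] by blast
    with \<open>S \<subseteq> set V\<close> have "falls S e"
      by (intro isW_falls[OF assms(1)]) auto
    then show "red (kill S (word e)) = []"
      by (simp add: falls_def)
  next
    assume "red (kill S (word e)) = []"
    then have "falls S e"
      by (simp add: falls_def)
    show "2 \<le> card S"
    proof (rule ccontr)
      assume "\<not> 2 \<le> card S"
      have "V \<noteq> []"
        using assms(1) by cases auto
      obtain a where "a \<in> set V" and "S \<subseteq> {a}"
      proof (cases "S = {}")
        case True
        with \<open>V \<noteq> []\<close> show ?thesis
          using that[of "hd V"] by simp
      next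
        case False
        then obtain a where "a \<in> S"
          by blast
        have "card S \<le> Suc 0"
          using \<open>\<not> 2 \<le> card S\<close> by simp
        with \<open>a \<in> S\<close> have "S \<subseteq> {a}"
          using card_le_Suc0_iff_eq[OF \<open>finite S\<close>] by blast
        with \<open>a \<in> S\<close> \<open>S \<subseteq> set V\<close> show ?thesis
          using that by blast
      qed
      obtain \<phi> where "\<phi> a = 1" "perm_of_fexpr \<phi> e = kappa"
        using isW_realises_kappa[OF assms \<open>a \<in> set V\<close>] by blast
      moreover have "perm_of_fexpr \<phi> e = 1"
        using \<open>falls S e\<close> by (rule perm_of_fexpr_falls) (use \<open>S \<subseteq> {a}\<close> \<open>\<phi> a = 1\<close> in auto)
      ultimately show False
        using kappa_ne_one by simp
    qed
  qed
qed

section \<open>Formal length\<close>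

lemma length_word: "length (word e) = flen e"
  by (induction e) (simp_all add: inv_word_def)

lemma exists_max_arrangement:
  fixes f :: "'x \<Rightarrow> 'b::linorder"
  shows "\<exists>X Y Z. mset [X, Y, Z] = mset [P, Q, C] \<and> f P \<le> f X \<and> f Q \<le> f X \<and> f C \<le> f X"
proof -
  consider "f Q \<le> f P" "f C \<le> f P" | "f P \<le> f Q" "f C \<le> f Q" | "f P \<le> f C" "f Q \<le> f C"
    by (meson le_cases order.trans)
  then show ?thesis
  proof cases
    case 1
    then show ?thesis
      by blast
  next
    case 2
    then show ?thesis
      by (intro exI[of _ Q] exI[of _ P] exI[of _ C]) (simp add: add_mset_commute)
  next
    case 3
    then show ?thesis
      by (intro exI[of _ C] exI[of _ P] exI[of _ Q]) (simp add: add_mset_commute)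
  qed
qed

lemma isW_exists: "length U = 2 ^ t \<Longrightarrow> 1 \<le> t \<Longrightarrow> \<exists>e. isW U e"
proof (induction t arbitrary: U)
  case (Suc t)
  show ?case
  proof (cases "t = 0")
    case True
    with Suc.prems obtain a b where "U = [a, b]"
      by (auto simp: length_Suc_conv numeral_2_eq_2)
    then show ?thesis
      using isW.base[of a b] by blast
  next
    case False
    then have "1 \<le> t"
      by simp
    define L R where "L = take (length U div 2) U" and "R = drop (length U div 2) U"
    have "length L = 2 ^ t" "length R = 2 ^ t"
      using Suc.prems by (simp_all add: L_def R_def)
    then obtain P Q where "isW L P" "isW R Q"
      using Suc.IH[OF _ \<open>1 \<le> t\<close>] by blast
    obtain X Y Z where XYZ: "mset [X, Y, Z] = mset [P, Q, Add (btree L) (btree R)]"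
      "flen P \<le> flen X" "flen Q \<le> flen X" "flen (Add (btree L) (btree R)) \<le> flen X"
      using exists_max_arrangement[where f = flen] by blast
    have "(2::nat) ^ 1 \<le> 2 ^ t"
      using \<open>1 \<le> t\<close> by (rule power_increasing) simp
    with Suc.prems have "4 \<le> length U"
      by simp
    show ?thesis
      using isW.step[OF \<open>4 \<le> length U\<close> L_def R_def \<open>isW L P\<close> \<open>isW R Q\<close> refl XYZ] by blast
  qed
qed simp

lemma flen_Comm_arrangement:
  assumes "mset [X, Y, Z] = mset [P, Q, C]"
  shows "flen (Comm X (Comm Y Z)) + 2 * flen X = 4 * (flen P + flen Q + flen C)"
proof -
  have "flen X + flen Y + flen Z = flen P + flen Q + flen C"
    using arg_cong[OF assms, of "\<lambda>M. sum_mset (image_mset flen M)"] by simp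
  then show ?thesis
    by simp
qed

lemma flen_isW_length_2: "isW U e \<Longrightarrow> length U = 2 \<Longrightarrow> flen e = 2"
  by (induction rule: isW.induct) auto

lemma four_pow_le_six_pow: "2 \<le> m \<Longrightarrow> 9 * 4 ^ m \<le> 4 * (6::nat) ^ m"
proof (induction m rule: dec_induct)
  case (step m)
  then show ?case
    by simp
qed simp

lemma flen_isW:
  assumes "isW U e" and "length U = 2 ^ t" and "2 \<le> t"
  shows "3 * flen e + 12 * 4 ^ t = 8 * 6 ^ t"
  using assms
proof (induction arbitrary: t rule: isW.induct)
  case (base a b)
  have "(2::nat) ^ 2 \<le> 2 ^ t"
    using base.prems(2) by (rule power_increasing) simp
  with base.prems(1) show ?case
    by simp
next
  case (step U L R P Q C X Y Z)
  obtain m where t: "t = Suc m"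
    using step.prems(2) by (cases t) auto
  have lengths: "length L = 2 ^ m" "length R = 2 ^ m"
    using step.hyps(2,3) step.prems(1) t by simp_all
  have C: "flen C = 2 * 4 ^ m"
    using step.hyps(6) flen_btree[OF lengths(1)] flen_btree[OF lengths(2)] by simp
  have "set [X, Y, Z] = set [P, Q, C]"
    by (metis step.hyps(7) set_mset_mset)
  then have X: "X \<in> {P, Q, C}"
    by auto
  note sum = flen_Comm_arrangement[OF step.hyps(7)]
  show ?case
  proof (cases "m = 1")
    case True
    then have "flen P = 2" "flen Q = 2"
      using flen_isW_length_2 step.hyps(4,5) lengths by auto
    with C True X step.hyps(10) have "flen X = 8"
      by auto
    with sum C True t \<open>flen P = 2\<close> \<open>flen Q = 2\<close> show ?thesis
      by simp
  next
    case False
    with t step.prems(2) have "2 \<le> m"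
      by simp
    then have P: "3 * flen P + 12 * 4 ^ m = 8 * 6 ^ m" and Q: "3 * flen Q + 12 * 4 ^ m = 8 * 6 ^ m"
      using step.IH lengths by blast+
    moreover have "9 * 4 ^ m \<le> 4 * (6::nat) ^ m"
      using \<open>2 \<le> m\<close> by (rule four_pow_le_six_pow)
    ultimately have "flen C \<le> flen P" "flen Q = flen P"
      using C by linarith+
    with X step.hyps(8,10) have "flen X = flen P"
      by auto
    with sum P C t \<open>flen Q = flen P\<close> show ?thesis
      by simp
  qed
qed

lemma two_pow_powr_log: "0 < x \<Longrightarrow> (2 ^ n :: real) powr log 2 x = x ^ n"
proof -
  assume "0 < x"
  have "(2 ^ n :: real) powr log 2 x = (2 powr log 2 x) powr real n"
    by (simp add: powr_powr mult.commute flip: powr_realpow)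
  also have "\<dots> = x ^ n"
    using \<open>0 < x\<close> by (simp add: powr_realpow)
  finally show ?thesis .
qed

lemma flen_isW_closed_form:
  assumes "isW V e" and "length V = 2 ^ i" and "2 \<le> i"
  shows "real (flen e) = 8/3 * real (length V) powr (log 2 6) - 4 * real (length V) ^ 2"
    and "real (flen e) = 8/3 * 6 ^ i - 4 * 4 ^ i"
proof -
  have "3 * real (flen e) + 12 * 4 ^ i = 8 * 6 ^ i"
    using arg_cong[OF flen_isW[OF assms], of real] by simp
  then show flen: "real (flen e) = 8/3 * 6 ^ i - 4 * 4 ^ i"
    by simp
  have V: "real (length V) = 2 ^ i"
    using assms(2) by simp
  have "real (length V) powr log 2 6 = 6 ^ i"
    unfolding V by (rule two_pow_powr_log) simp
  moreover have "real (length V) ^ 2 = 4 ^ i"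
    unfolding V by (simp add: power2_eq_square power_mult_distrib[symmetric])
  ultimately show "real (flen e) = 8/3 * real (length V) powr (log 2 6) - 4 * real (length V) ^ 2"
    using flen by simp
qed

theorem theorem3:
  fixes V :: "'a list" and i :: nat
  assumes "distinct V" and "length V = 2 ^ i" and "i \<ge> 2"
  shows "(\<exists>e. isW V e) \<and>
    (\<forall>e. isW V e \<longrightarrow>
       solves 2 (set V) (word e) \<and>
       real (flen e) = 8/3 * real (length V) powr (log 2 6) - 4 * real (length V) ^ 2 \<and>
       real (flen e) = 8/3 * 6 ^ i - 4 * 4 ^ i \<and>
       real (length (red (word e))) \<le> 8/3 * real (length V) powr (log 2 6) - 4 * real (length V) ^ 2)"
proof (intro conjI allI impI)
  show "\<exists>e. isW V e"
    using isW_exists[OF assms(2)] assms(3) by simp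
next
  fix e
  assume W: "isW V e"
  note closed_form = flen_isW_closed_form[OF W assms(2,3)]
  show "solves 2 (set V) (word e)"
    by (rule isW_solves[OF W assms(1)])
  show "real (flen e) = 8/3 * real (length V) powr (log 2 6) - 4 * real (length V) ^ 2"
    by (rule closed_form(1))
  show "real (flen e) = 8/3 * 6 ^ i - 4 * 4 ^ i"
    by (rule closed_form(2))
  show "real (length (red (word e))) \<le> 8/3 * real (length V) powr (log 2 6) - 4 * real (length V) ^ 2"
    using length_red_le[of "word e"] closed_form(1) by (simp add: length_word)
qed

end
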